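(* Let $g,h\in\mathcal{G}$ with $\Theta(g,h)<\infty$. If $g$ is slow-dropping and slow-jumping, then so is $h$.
   Context: $\mathcal{G}=\{g:\mathbb{Z}_{\ge0}\to\mathbb{R}: g(0)=0,\ g(1)=1,\ g(x)>0\ \forall x>0\}$. For $g,h\in\mathcal{G}$, $\Theta(g,h)=\sup_{x\in\mathbb{N}}|\log g(x)-\log h(x)|$ (an extended metric). $g$ is slow-jumping if for every $\alpha>0$ there is $N>0$ such that for all positive integers $x<y$ with $y\ge N$, $g(y)\le \lfloor y/x\rfloor^{2+\alpha}x^\alpha g(x)$. $g$ is slow-dropping if for every $\alpha>0$ there is $N>0$ such that for all $x<y$ with $y\ge N$, $g(y)\ge g(x)/y^\alpha$. *)

theory Defs
  imports "HOL-Analysis.Analysis"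
begin

definition classG :: "(nat \<Rightarrow> real) \<Rightarrow> bool" where
  "classG g \<longleftrightarrow> g 0 = 0 \<and> g 1 = 1 \<and> (\<forall>x>0. g x > 0)"

definition Theta :: "(nat \<Rightarrow> real) \<Rightarrow> (nat \<Rightarrow> real) \<Rightarrow> ereal" where
  "Theta g h = (SUP x\<in>{1..}. ereal \<bar>ln (g x) - ln (h x)\<bar>)"

definition slow_jumping :: "(nat \<Rightarrow> real) \<Rightarrow> bool" where
  "slow_jumping g \<longleftrightarrow> (\<forall>\<alpha>>0. \<exists>N>0. \<forall>x y. 0 < x \<and> x < y \<and> N \<le> y \<longrightarrow>
     g y \<le> real (y div x) powr (2 + \<alpha>) * real x powr \<alpha> * g x)"

definition slow_dropping :: "(nat \<Rightarrow> real) \<Rightarrow> bool" where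
  "slow_dropping g \<longleftrightarrow> (\<forall>\<alpha>>0. \<exists>N>0. \<forall>x y. 0 < x \<and> x < y \<and> N \<le> y \<longrightarrow>
     g y \<ge> g x / real y powr \<alpha>)"

end

theory Submission
  imports Defs "HOL-Real_Asymp.Real_Asymp"
begin

text \<open>Finite \<open>\<Theta>\<close> means that \<open>g\<close> and \<open>h\<close> agree up to a constant factor \<open>K\<close>. Both
  properties tolerate such a factor: in slow-dropping and slow-jumping with exponent \<open>\<alpha>\<close> one
  uses the property of \<open>g\<close> with exponent \<open>\<alpha>/2\<close>, and for large \<open>y\<close> the spare factor
  \<open>y\<^bsup>\<alpha>/2\<^esup>\<close> (resp. \<open>(\<lfloor>y/x\<rfloor> x)\<^bsup>\<alpha>/2\<^esup> \<ge> (y/2)\<^bsup>\<alpha>/2\<^esup>\<close>) absorbs \<open>K\<^sup>2\<close>.\<close>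

definition comparable_by :: "real \<Rightarrow> (nat \<Rightarrow> real) \<Rightarrow> (nat \<Rightarrow> real) \<Rightarrow> bool" where
  "comparable_by K g h \<longleftrightarrow> (\<forall>x>0. g x \<le> K * h x \<and> h x \<le> K * g x)"

lemma Theta_finite_imp_comparable:
  assumes "classG g" and "classG h" and "Theta g h < \<infinity>"
  shows "\<exists>K>0. comparable_by K g h"
proof -
  have le_Theta: "ereal \<bar>ln (g x) - ln (h x)\<bar> \<le> Theta g h" if "x \<ge> 1" for x
    unfolding Theta_def using that by (intro SUP_upper) auto
  have "0 \<le> Theta g h"
    using le_Theta[of 1] order_trans[of 0 "ereal \<bar>ln (g 1) - ln (h 1)\<bar>" "Theta g h"] by simp
  then obtain C where C: "Theta g h = ereal C"
    using assms(3) by (cases "Theta g h") auto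
  have "g x \<le> exp C * h x \<and> h x \<le> exp C * g x" if "x > 0" for x
  proof -
    have pos: "g x > 0" "h x > 0"
      using assms(1,2) that unfolding classG_def by auto
    have "\<bar>ln (g x) - ln (h x)\<bar> \<le> C"
      using le_Theta[of x] that C by simp
    then have "exp (ln (g x)) \<le> exp (ln (h x) + C)" "exp (ln (h x)) \<le> exp (ln (g x) + C)"
      by auto
    then show ?thesis
      using pos by (simp add: exp_add mult.commute)
  qed
  then show ?thesis
    unfolding comparable_by_def by (intro exI[of _ "exp C"]) auto
qed

lemma eventually_powr_ge:
  assumes "\<beta> > 0"
  shows "\<exists>N. \<forall>y\<ge>N. M \<le> real y powr \<beta>"
proof -
  have "filterlim (\<lambda>y. real y powr \<beta>) at_top sequentially"
    using assms by real_asymp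
  then show ?thesis
    by (simp add: filterlim_at_top eventually_sequentially)
qed

lemma half_le_div_mult:
  fixes x y :: nat
  assumes "0 < x" and "x \<le> y"
  shows "real y / 2 \<le> real (y div x) * real x"
proof -
  have "x \<le> y div x * x"
    using assms div_greater_zero_iff[of y x] by simp
  moreover have "y = y div x * x + y mod x" and "y mod x < x"
    using assms by simp_all
  ultimately have "y \<le> 2 * (y div x * x)"
    by linarith
  then show ?thesis
    by (metis of_nat_le_iff of_nat_mult of_nat_numeral divide_le_eq mult.commute zero_less_numeral)
qed

lemma slow_dropping_comparable:
  assumes "slow_dropping g" and "comparable_by K g h" and "K > 0"
    and h_nonneg: "\<And>x. x > 0 \<Longrightarrow> 0 \<le> h x"
  shows "slow_dropping h"
  unfolding slow_dropping_def
proof (intro allI impI)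
  fix \<alpha> :: real
  assume "\<alpha> > 0"
  then obtain N1 where "N1 > 0" and drop_g:
    "\<And>x y. 0 < x \<Longrightarrow> x < y \<Longrightarrow> N1 \<le> y \<Longrightarrow> g x / real y powr (\<alpha>/2) \<le> g y"
    using assms(1) unfolding slow_dropping_def by (meson half_gt_zero)
  obtain N2 where large: "\<And>y. N2 \<le> y \<Longrightarrow> K\<^sup>2 \<le> real y powr (\<alpha>/2)"
    using eventually_powr_ge[of "\<alpha>/2" "K\<^sup>2"] \<open>\<alpha> > 0\<close> by auto
  show "\<exists>N>0. \<forall>x y. 0 < x \<and> x < y \<and> N \<le> y \<longrightarrow> h x / real y powr \<alpha> \<le> h y"
  proof (intro exI[of _ "max N1 N2"] conjI allI impI)
    fix x y :: nat
    assume xy: "0 < x \<and> x < y \<and> max N1 N2 \<le> y"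
    define P where "P = real y powr (\<alpha>/2)"
    have "P > 0" and "K\<^sup>2 \<le> P"
      using xy large unfolding P_def by auto
    have "real y powr \<alpha> = P * P"
      unfolding P_def by (simp flip: powr_add)
    have "h x / (P * P) \<le> h x / (K * K * P)"
      using h_nonneg[of x] xy \<open>K > 0\<close> \<open>P > 0\<close> \<open>K\<^sup>2 \<le> P\<close>
      by (intro divide_left_mono mult_right_mono) (auto simp: power2_eq_square)
    also have "\<dots> = (h x / K) / P / K"
      by simp
    also have "\<dots> \<le> g x / P / K"
      using assms(2) xy \<open>K > 0\<close> \<open>P > 0\<close> unfolding comparable_by_def
      by (intro divide_right_mono) (auto simp: field_simps mult.commute)
    also have "\<dots> \<le> g y / K"
      using drop_g[of x y] xy \<open>K > 0\<close> unfolding P_def by (intro divide_right_mono) auto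
    also have "\<dots> \<le> h y"
      using assms(2) xy \<open>K > 0\<close> unfolding comparable_by_def by (auto simp: field_simps mult.commute)
    finally show "h x / real y powr \<alpha> \<le> h y"
      using \<open>real y powr \<alpha> = P * P\<close> by simp
  qed (use \<open>N1 > 0\<close> in simp)
qed

lemma slow_jumping_comparable:
  assumes "slow_jumping g" and "comparable_by K g h" and "K > 0"
    and h_nonneg: "\<And>x. x > 0 \<Longrightarrow> 0 \<le> h x"
  shows "slow_jumping h"
  unfolding slow_jumping_def
proof (intro allI impI)
  fix \<alpha> :: real
  assume "\<alpha> > 0"
  then obtain N1 where "N1 > 0" and jump_g: "\<And>x y. 0 < x \<Longrightarrow> x < y \<Longrightarrow> N1 \<le> y \<Longrightarrow>
      g y \<le> real (y div x) powr (2 + \<alpha>/2) * real x powr (\<alpha>/2) * g x"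
    using assms(1) unfolding slow_jumping_def by (meson half_gt_zero)
  obtain N2 where large: "\<And>y. N2 \<le> y \<Longrightarrow> K\<^sup>2 * 2 powr (\<alpha>/2) \<le> real y powr (\<alpha>/2)"
    using eventually_powr_ge[of "\<alpha>/2"] \<open>\<alpha> > 0\<close> by auto
  show "\<exists>N>0. \<forall>x y. 0 < x \<and> x < y \<and> N \<le> y \<longrightarrow>
      h y \<le> real (y div x) powr (2 + \<alpha>) * real x powr \<alpha> * h x"
  proof (intro exI[of _ "max N1 N2"] conjI allI impI)
    fix x y :: nat
    assume xy: "0 < x \<and> x < y \<and> max N1 N2 \<le> y"
    define q where "q = y div x"
    define A where "A = real q powr (2 + \<alpha>/2) * real x powr (\<alpha>/2)"
    define B where "B = real q powr (\<alpha>/2) * real x powr (\<alpha>/2)"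
    have "A \<ge> 0"
      unfolding A_def by simp
    have "real q powr (2 + \<alpha>) = real q powr (2 + \<alpha>/2) * real q powr (\<alpha>/2)"
      and "real x powr \<alpha> = real x powr (\<alpha>/2) * real x powr (\<alpha>/2)"
      by (simp_all add: add.commute flip: powr_add)
    then have AB: "real q powr (2 + \<alpha>) * real x powr \<alpha> = A * B"
      unfolding A_def B_def by (simp add: algebra_simps)
    have "K\<^sup>2 \<le> real y powr (\<alpha>/2) / 2 powr (\<alpha>/2)"
      using large[of y] xy by (simp add: field_simps)
    also have "\<dots> = (real y / 2) powr (\<alpha>/2)"
      by (simp add: powr_divide)
    also have "\<dots> \<le> (real q * real x) powr (\<alpha>/2)"
      using half_le_div_mult[of x y] xy \<open>\<alpha> > 0\<close> unfolding q_def by (intro powr_mono2) auto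
    also have "\<dots> = B"
      unfolding B_def by (simp add: powr_mult)
    finally have "K\<^sup>2 \<le> B" .
    have "h y \<le> K * g y"
      using assms(2) xy unfolding comparable_by_def by auto
    also have "\<dots> \<le> K * (A * g x)"
      using jump_g[of x y] xy \<open>K > 0\<close> unfolding A_def q_def by (intro mult_left_mono) auto
    also have "\<dots> \<le> K * (A * (K * h x))"
      using assms(2) xy \<open>K > 0\<close> \<open>A \<ge> 0\<close> unfolding comparable_by_def
      by (intro mult_left_mono) auto
    also have "\<dots> = A * K\<^sup>2 * h x"
      by (simp add: power2_eq_square)
    also have "\<dots> \<le> A * B * h x"
      using \<open>A \<ge> 0\<close> \<open>K\<^sup>2 \<le> B\<close> h_nonneg[of x] xy by (intro mult_right_mono mult_left_mono) auto
    finally show "h y \<le> real (y div x) powr (2 + \<alpha>) * real x powr \<alpha> * h x"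
      using AB unfolding q_def by simp
  qed (use \<open>N1 > 0\<close> in simp)
qed

theorem proposition63:
  fixes g h :: "nat \<Rightarrow> real"
  assumes "classG g" and "classG h" and "Theta g h < \<infinity>"
    and "slow_dropping g" and "slow_jumping g"
  shows "slow_dropping h \<and> slow_jumping h"
proof -
  obtain K where "K > 0" and "comparable_by K g h"
    using Theta_finite_imp_comparable[OF assms(1-3)] by blast
  moreover have "\<And>x. x > 0 \<Longrightarrow> 0 \<le> h x"
    using assms(2) unfolding classG_def by (simp add: less_imp_le)
  ultimately show ?thesis
    using slow_dropping_comparable[OF assms(4)] slow_jumping_comparable[OF assms(5)] by blast
qed

end
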